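(* Let $K\ge1$ be an integer and $t_1,t_2\in\mathbb C$. Let $A$ be the $2K\times2K$ matrix with entries \[ A_{i,j}=\frac{1}{2\pi i}\oint_{|u|=2}\frac{u^{i+j-2}\exp\left(\frac{t_1}{u-1}+\frac{t_2}{u+1}\right)}{(u-1)^K}\,du\quad(1\le i\le K,\ 1\le j\le 2K), \] \[ A_{K+i,j}=\frac{1}{2\pi i}\oint_{|u|=2}\frac{u^{i+j-2}\exp\left(\frac{t_1}{u-1}+\frac{t_2}{u+1}\right)}{(u+1)^K}\,du\quad(1\le i\le K,\ 1\le j\le 2K). \] Then $\det A=(-2)^{K^2}$; in particular $\det A$ is independent of $t_1$ and $t_2$.
   Context: The circle $|u|=2$ is positively oriented. *)

theory Defs
  imports "HOL-Complex_Analysis.Complex_Analysis" "Jordan_Normal_Form.Determinant"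
begin

text \<open>Entries of the 2K x 2K matrix A, with 0-based indices i, j < 2K
  (paper index (i+1, j+1)).\<close>
definition A_entry :: "nat \<Rightarrow> complex \<Rightarrow> complex \<Rightarrow> nat \<Rightarrow> nat \<Rightarrow> complex" where
  "A_entry K t1 t2 i j =
     (if i < K then
        contour_integral (circlepath 0 2)
          (\<lambda>u. u ^ (i + j) * exp (t1 / (u - 1) + t2 / (u + 1)) / (u - 1) ^ K)
          / (2 * of_real pi * \<i>)
      else
        contour_integral (circlepath 0 2)
          (\<lambda>u. u ^ (i - K + j) * exp (t1 / (u - 1) + t2 / (u + 1)) / (u + 1) ^ K)
          / (2 * of_real pi * \<i>))"

definition A_mat :: "nat \<Rightarrow> complex \<Rightarrow> complex \<Rightarrow> complex Matrix.mat" where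
  "A_mat K t1 t2 = Matrix.mat (2 * K) (2 * K) (\<lambda>(i, j). A_entry K t1 t2 i j)"

end

theory Submission
  imports Defs
begin

text \<open>Write \<open>E(u) = exp (t1/(u-1) + t2/(u+1))\<close> and \<open>x = u + 1\<close>. Every integrand of \<open>A\<close>
  is a polynomial in \<open>x\<close> times \<open>u^j E(u) / (u\<^sup>2 - 1)^K\<close>: row \<open>r < K\<close> has the polynomial
  \<open>x^K (x-1)^r\<close>, row \<open>K + r\<close> the polynomial \<open>(x-1)^r (x-2)^K\<close>. Hence \<open>A = S M\<close>, where
  \<open>S\<close> holds the coefficients of these polynomials and \<open>M\<close> the moments
  \<open>(1/2\<pi>i) \<oint> (u+1)^k u^j E(u) / (u\<^sup>2 - 1)^K du\<close>, \<open>k, j < 2K\<close>.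
  Substituting \<open>u = 1/w\<close> turns a moment into the integral of a function holomorphic
  in the unit disc times \<open>w^(2K-k-j-2)\<close>; so \<open>M\<close> vanishes above the anti-diagonal and is
  \<open>1\<close> on it, independently of \<open>t1, t2\<close>. After moving the last \<open>K\<close> columns of \<open>S\<close> to the
  front, \<open>S\<close> is block lower triangular with a unitriangular block and a block whose
  determinant is \<open>(-2)^(K\<^sup>2)\<close>. The signs of the two permutations cancel.\<close>

lemma inverse_circlepath:
  assumes "r > 0"
  shows "inverse \<circ> circlepath 0 r = reversepath (circlepath 0 (1 / r))"
proof
  fix x
  have "2 * of_real pi * \<i> * of_real (1 - x) = 2 * of_real pi * \<i> - 2 * of_real pi * \<i> * (of_real x :: complex)"
    by (simp add: algebra_simps)
  then have "exp (2 * of_real pi * \<i> * of_real (1 - x)) = inverse (exp (2 * of_real pi * \<i> * of_real x))"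
    by (simp add: exp_diff exp_minus field_simps)
  then show "(inverse \<circ> circlepath 0 r) x = reversepath (circlepath 0 (1 / r)) x"
    unfolding circlepath reversepath_def o_def using assms by (simp add: field_simps)
qed

text \<open>The substitution \<open>u = 1/w\<close> reverses the orientation and contributes \<open>-1/w\<^sup>2\<close>.\<close>

lemma contour_integral_circlepath_inverse_subst:
  assumes H: "H holomorphic_on ball 0 1" and r: "r > 1" and n: "n \<ge> 1"
    and F: "\<And>u. u \<in> sphere 0 r \<Longrightarrow> F u = H (inverse u) / u ^ n"
  shows "contour_integral (circlepath 0 r) F = (if n = 1 then 2 * of_real pi * \<i> * H 0 else 0)"
proof -
  define G where "G w = - H w * w ^ n / w\<^sup>2" for w :: complex
  have r0: "r > 0" and small: "1 / r < 1" using r by auto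
  have "inverse analytic_on (- {0::complex})"
    by (rule analytic_on_inverse[of "\<lambda>x. x", unfolded]) (auto intro: analytic_intros)
  moreover have "path_image (circlepath 0 r) \<subseteq> - {0}" using r0 by auto
  moreover have "contour_integral (circlepath 0 r) F
      = contour_integral (circlepath 0 r) (\<lambda>w. deriv inverse w * G (inverse w))"
  proof (rule contour_integral_eq)
    fix u assume u: "u \<in> path_image (circlepath 0 r)"
    then have u0: "u \<noteq> 0" using r0 by auto
    have "deriv inverse u = - (inverse u)\<^sup>2"
      using DERIV_inverse[OF u0] by (simp add: DERIV_imp_deriv power2_eq_square)
    then show "F u = deriv inverse u * G (inverse u)"
      using u u0 r0 F[of u] by (auto simp: G_def field_simps power_inverse)
  qed
  ultimately have "contour_integral (circlepath 0 r) F = contour_integral (inverse \<circ> circlepath 0 r) G"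
    using contour_integral_comp_analyticW valid_path_circlepath by metis
  also have "\<dots> = contour_integral (circlepath 0 (1 / r)) (\<lambda>w. H w * w ^ n / w\<^sup>2)"
    unfolding inverse_circlepath[OF r0] G_def
    by (simp add: contour_integral_reversepath contour_integral_neg[symmetric])
  also have "\<dots> = (if n = 1 then 2 * of_real pi * \<i> * H 0 else 0)"
  proof (cases "n = 1")
    case True
    have "H holomorphic_on cball 0 (1 / r)"
      by (rule holomorphic_on_subset[OF H]) (use small in auto)
    then have "((\<lambda>w. H w / (w - 0)) has_contour_integral 2 * of_real pi * \<i> * H 0) (circlepath 0 (1 / r))"
      using r0 by (intro Cauchy_integral_circlepath_simple) auto
    moreover have "contour_integral (circlepath 0 (1 / r)) (\<lambda>w. H w * w ^ n / w\<^sup>2)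
        = contour_integral (circlepath 0 (1 / r)) (\<lambda>w. H w / (w - 0))"
      by (rule contour_integral_eq) (auto simp: True power2_eq_square)
    ultimately show ?thesis
      using True by (simp add: contour_integral_unique)
  next
    case False
    then have "n \<ge> 2" using n by simp
    then have "w ^ n = w ^ (n - 2) * w\<^sup>2" for w :: complex
      by (metis le_add_diff_inverse2 power_add)
    then have "contour_integral (circlepath 0 (1 / r)) (\<lambda>w. H w * w ^ n / w\<^sup>2)
        = contour_integral (circlepath 0 (1 / r)) (\<lambda>w. H w * w ^ (n - 2))"
      using r0 by (intro contour_integral_eq) auto
    also have "\<dots> = 0"
      by (rule contour_integral_unique[OF Cauchy_theorem_convex_simple[of _ "ball 0 1"]])
         (use small r0 in \<open>auto intro!: holomorphic_intros H\<close>)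
    finally show ?thesis using False by simp
  qed
  finally show ?thesis .
qed

lemma det_anti_triangular:
  fixes A :: "'a::comm_ring_1 mat"
  assumes "A \<in> carrier_mat n n"
    and "\<And>i j. i < n \<Longrightarrow> j < n \<Longrightarrow> i + j + 1 < n \<Longrightarrow> A $$ (i, j) = 0"
    and "\<And>i. i < n \<Longrightarrow> A $$ (i, n - 1 - i) = 1"
  shows "det A = (-1) ^ (n * (n - 1) div 2)"
  using assms
proof (induction n arbitrary: A)
  case 0
  then show ?case by simp
next
  case (Suc n)
  have A: "A \<in> carrier_mat (Suc n) (Suc n)" by fact
  have minor: "det (mat_delete A 0 n) = (-1) ^ (n * (n - 1) div 2)"
  proof (rule Suc.IH)
    have entry: "mat_delete A 0 n $$ (i, j) = A $$ (Suc i, j)" if "i < n" "j < n" for i j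
      using A that by (simp add: mat_delete_def)
    show "mat_delete A 0 n $$ (i, j) = 0" if "i < n" "j < n" "i + j + 1 < n" for i j
      using that entry Suc.prems(2)[of "Suc i" j] by simp
    show "mat_delete A 0 n $$ (i, n - 1 - i) = 1" if "i < n" for i
      using that entry Suc.prems(3)[of "Suc i"] by simp
  qed (use mat_delete_carrier[OF A] in simp)
  have "det A = (\<Sum>j<Suc n. A $$ (0, j) * cofactor A 0 j)"
    by (rule laplace_expansion_row[OF A]) simp
  also have "\<dots> = cofactor A 0 n"
    using Suc.prems(2)[of 0] Suc.prems(3)[of 0] by (simp add: sum.lessThan_Suc)
  also have "\<dots> = (-1) ^ (n + n * (n - 1) div 2)"
    unfolding cofactor_def minor by (simp add: power_add)
  also have "n + n * (n - 1) div 2 = Suc n * (Suc n - 1) div 2"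
    by (cases n) auto
  finally show ?case .
qed

text \<open>The matrix factors as a lower unitriangular matrix (coefficients of the powers
  \<open>(x + c)^i\<close>) times an upper triangular Toeplitz matrix (coefficients of \<open>q\<close>).\<close>

lemma det_coeff_mat_linear_power_mult:
  fixes c :: "'a::comm_ring_1" and q :: "'a poly"
  shows "det (mat n n (\<lambda>(i, j). coeff ([:c, 1:] ^ i * q) j)) = coeff q 0 ^ n"
proof -
  define U where "U = mat n n (\<lambda>(i, m). coeff ([:c, 1:] ^ i) m)"
  define T where "T = mat n n (\<lambda>(m, j). if m \<le> j then coeff q (j - m) else 0)"
  have U: "U \<in> carrier_mat n n" and T: "T \<in> carrier_mat n n"
    by (simp_all add: U_def T_def)
  have "mat n n (\<lambda>(i, j). coeff ([:c, 1:] ^ i * q) j) = U * T"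
  proof (rule eq_matI)
    fix i j assume "i < dim_row (U * T)" "j < dim_col (U * T)"
    then have i: "i < n" and j: "j < n" by (simp_all add: U_def T_def)
    have "(U * T) $$ (i, j) = (\<Sum>m<n. if m \<le> j then coeff ([:c, 1:] ^ i) m * coeff q (j - m) else 0)"
      using i j by (simp add: U_def T_def scalar_prod_def atLeast0LessThan if_distrib cong: if_cong)
    also have "\<dots> = (\<Sum>m\<le>j. coeff ([:c, 1:] ^ i) m * coeff q (j - m))"
      using j by (simp add: sum.inter_filter[symmetric] lessThan_def atMost_def Collect_conj_eq[symmetric])
        (metis le_less_trans)
    finally show "mat n n (\<lambda>(i, j). coeff ([:c, 1:] ^ i * q) j) $$ (i, j) = (U * T) $$ (i, j)"
      using i j by (simp add: coeff_mult)
  qed (simp_all add: U_def T_def)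
  moreover have "det U = 1"
  proof -
    have "det U = prod_list (diag_mat U)"
      by (rule det_lower_triangular[OF _ U]) (simp add: U_def degree_linear_power coeff_eq_0)
    then show ?thesis
      by (simp add: prod_list_diag_prod U_def coeff_linear_power)
  qed
  moreover have "det T = coeff q 0 ^ n"
  proof -
    have "det T = prod_list (diag_mat T)"
      by (rule det_upper_triangular[OF _ T]) (auto simp: T_def)
    then show ?thesis
      by (simp add: prod_list_diag_prod T_def)
  qed
  ultimately show ?thesis
    by (simp add: det_mult[OF U T])
qed

lemma contour_integral_poly_mult:
  fixes p :: "complex poly"
  assumes "degree p < n" and "\<And>k. k < n \<Longrightarrow> (\<lambda>u. x u ^ k * g u) contour_integrable_on \<gamma>"
  shows "contour_integral \<gamma> (\<lambda>u. poly p (x u) * g u)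
           = (\<Sum>k<n. coeff p k * contour_integral \<gamma> (\<lambda>u. x u ^ k * g u))"
proof -
  have "poly p y = (\<Sum>k<n. coeff p k * y ^ k)" for y
    unfolding poly_altdef using assms(1)
    by (intro sum.mono_neutral_left) (auto simp: coeff_eq_0)
  then have "contour_integral \<gamma> (\<lambda>u. poly p (x u) * g u)
      = contour_integral \<gamma> (\<lambda>u. \<Sum>k<n. coeff p k * (x u ^ k * g u))"
    by (simp add: sum_distrib_right mult.assoc)
  also have "\<dots> = (\<Sum>k<n. contour_integral \<gamma> (\<lambda>u. coeff p k * (x u ^ k * g u)))"
    using assms(2) by (intro contour_integral_sum contour_integrable_lmul) auto
  also have "\<dots> = (\<Sum>k<n. coeff p k * contour_integral \<gamma> (\<lambda>u. x u ^ k * g u))"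
    using assms(2) by (intro sum.cong refl contour_integral_lmul) auto
  finally show ?thesis .
qed

definition moment_integrand :: "nat \<Rightarrow> complex \<Rightarrow> complex \<Rightarrow> nat \<Rightarrow> nat \<Rightarrow> complex \<Rightarrow> complex" where
  "moment_integrand K t1 t2 k j u =
     (u + 1) ^ k * u ^ j * exp (t1 / (u - 1) + t2 / (u + 1)) / (u\<^sup>2 - 1) ^ K"

lemma moment_integrand_holomorphic: "moment_integrand K t1 t2 k j holomorphic_on - {1, -1}"
proof -
  have nz: "u - 1 \<noteq> 0" "u + 1 \<noteq> 0" "u\<^sup>2 - 1 \<noteq> 0" if "u \<in> - {1, -1}" for u :: complex
    using that by (auto simp: power2_eq_1_iff add_eq_0_iff2)
  show ?thesis
    unfolding moment_integrand_def[abs_def] by (intro holomorphic_intros) (use nz in auto)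
qed

lemma contour_integral_moment_integrand:
  assumes "k + j < 2 * K"
  shows "contour_integral (circlepath 0 2) (moment_integrand K t1 t2 k j)
           = (if k + j + 1 = 2 * K then 2 * of_real pi * \<i> else 0)"
proof -
  define n where "n = 2 * K - k - j"
  define H where "H w = (1 + w) ^ k * exp (t1 * w / (1 - w) + t2 * w / (1 + w)) / (1 - w\<^sup>2) ^ K"
    for w :: complex
  have "H holomorphic_on ball 0 1"
  proof -
    have "1 - w \<noteq> 0" "1 + w \<noteq> 0" "1 - w\<^sup>2 \<noteq> 0" if "w \<in> ball 0 1" for w :: complex
      using that by (auto simp: power2_eq_1_iff add_eq_0_iff2 right_minus_eq minus_equation_iff[of w] dest: sym)
    then show ?thesis unfolding H_def by (intro holomorphic_intros) auto
  qed
  moreover have "moment_integrand K t1 t2 k j u = H (inverse u) / u ^ n" if "u \<in> sphere 0 2" for u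
  proof -
    have u: "u \<noteq> 0" "u - 1 \<noteq> 0" "u + 1 \<noteq> 0" "u\<^sup>2 - 1 \<noteq> 0"
      using that by (auto simp: power2_eq_1_iff add_eq_0_iff2)
    have eqs: "1 + inverse u = (u + 1) / u" "1 - (inverse u)\<^sup>2 = (u\<^sup>2 - 1) / u\<^sup>2"
      "t1 * inverse u / (1 - inverse u) = t1 / (u - 1)" "t2 * inverse u / (1 + inverse u) = t2 / (u + 1)"
      using u by (auto simp: field_simps power2_eq_square)
    have "H (inverse u) / u ^ n
        = (u + 1) ^ k * exp (t1 / (u - 1) + t2 / (u + 1)) * ((u\<^sup>2) ^ K / (u ^ k * u ^ n)) / (u\<^sup>2 - 1) ^ K"
      unfolding H_def eqs using u by (simp add: power_divide mult_ac)
    moreover have "(u\<^sup>2) ^ K = u ^ (k + n + j)"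
      using assms by (simp add: n_def power_mult[symmetric])
    ultimately show ?thesis
      using u by (simp add: moment_integrand_def power_add)
  qed
  ultimately have "contour_integral (circlepath 0 2) (moment_integrand K t1 t2 k j)
      = (if n = 1 then 2 * of_real pi * \<i> * H 0 else 0)"
    using assms by (intro contour_integral_circlepath_inverse_subst) (auto simp: n_def)
  moreover have "H 0 = 1" by (simp add: H_def)
  moreover have "n = 1 \<longleftrightarrow> k + j + 1 = 2 * K" using assms by (auto simp: n_def)
  ultimately show ?thesis by simp
qed

definition moment_mat :: "nat \<Rightarrow> complex \<Rightarrow> complex \<Rightarrow> complex mat" where
  "moment_mat K t1 t2 = mat (2 * K) (2 * K)
     (\<lambda>(k, j). contour_integral (circlepath 0 2) (moment_integrand K t1 t2 k j) / (2 * of_real pi * \<i>))"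

lemma det_moment_mat: "det (moment_mat K t1 t2) = (-1) ^ (K * (2 * K - 1))"
proof -
  have "det (moment_mat K t1 t2) = (-1) ^ (2 * K * (2 * K - 1) div 2)"
    by (rule det_anti_triangular) (simp_all add: moment_mat_def contour_integral_moment_integrand)
  then show ?thesis by simp
qed

definition row_poly :: "nat \<Rightarrow> nat \<Rightarrow> 'a::comm_ring_1 poly" where
  "row_poly K r = (if r < K then monom 1 K * [:-1, 1:] ^ r else [:-1, 1:] ^ (r - K) * [:-2, 1:] ^ K)"

definition row_poly_mat :: "nat \<Rightarrow> 'a::comm_ring_1 mat" where
  "row_poly_mat K = mat (2 * K) (2 * K) (\<lambda>(r, k). coeff (row_poly K r) k)"

lemma degree_row_poly:
  assumes "r < 2 * K"
  shows "degree (row_poly K r :: 'a::comm_ring_1 poly) < 2 * K"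
proof (cases "r < K")
  case True
  have "degree (monom 1 K * [:-1, 1:] ^ r :: 'a poly) \<le> K + r"
    by (rule order.trans[OF degree_mult_le]) (simp add: degree_linear_power add_mono degree_monom_le)
  then show ?thesis using True by (simp add: row_poly_def)
next
  case False
  have "degree ([:-1, 1:] ^ (r - K) * [:-2, 1:] ^ K :: 'a poly) \<le> r - K + K"
    by (rule order.trans[OF degree_mult_le]) (simp add: degree_linear_power)
  then show ?thesis using False assms by (simp add: row_poly_def)
qed

lemma det_row_poly_mat: "det (row_poly_mat K :: 'a::idom mat) = (-1) ^ (K * K) * (-2) ^ (K * K)"
proof -
  define C :: "'a mat" where "C = mat K K (\<lambda>(i, j). coeff (row_poly K (K + i)) (j + K))"
  define U :: "'a mat" where "U = mat K K (\<lambda>(i, j). coeff ([:-1, 1:] ^ i * 1) j)"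
  define B :: "'a mat" where "B = mat K K (\<lambda>(i, j). coeff ([:-1, 1:] ^ i * [:-2, 1:] ^ K) j)"
  have "row_poly_mat K \<in> carrier_mat (K + K) (K + K)" by (simp add: row_poly_mat_def mult_2)
  from det_swap_cols[OF this]
  have "det (row_poly_mat K :: 'a mat) = (-1) ^ (K * K) * det (four_block_mat U (0\<^sub>m K K) C B)"
    by (rule trans, intro arg_cong[where f = "\<lambda>M. _ * det M"] eq_matI)
       (auto simp: row_poly_mat_def U_def C_def B_def row_poly_def coeff_monom_mult)
  also have "det (four_block_mat U (0\<^sub>m K K) C B) = det U * det B"
    by (rule det_four_block_mat_upper_right_zero) (auto simp: U_def C_def B_def)
  also have "det U = 1"
    unfolding U_def det_coeff_mat_linear_power_mult by simp
  also have "det B = (-2) ^ (K * K)"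
    unfolding B_def det_coeff_mat_linear_power_mult by (simp add: coeff_0_power power_mult)
  finally show ?thesis by simp
qed

lemma A_entry_eq_contour_integral_row_poly:
  "A_entry K t1 t2 r j = contour_integral (circlepath 0 2)
     (\<lambda>u. poly (row_poly K r) (u + 1) * moment_integrand K t1 t2 0 j u) / (2 * of_real pi * \<i>)"
proof -
  have sq: "(u\<^sup>2 - 1) ^ K = (u - 1) ^ K * (u + 1) ^ K" for u :: complex
    by (simp add: power2_eq_square square_diff_one_factored power_mult_distrib mult.commute)
  have nz: "u - 1 \<noteq> 0" "u + 1 \<noteq> 0" if "norm u = 2" for u :: complex
    using that by (auto simp: add_eq_0_iff2)
  have lower: "u ^ (r + j) * E / (u - 1) ^ K = poly (row_poly K r) (u + 1) * (u ^ j * E / (u\<^sup>2 - 1) ^ K)"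
    if "r < K" "norm u = 2" for u E :: complex
    using that nz[OF that(2)] by (simp add: sq row_poly_def poly_monom power_add)
  have upper: "u ^ (r - K + j) * E / (u + 1) ^ K = poly (row_poly K r) (u + 1) * (u ^ j * E / (u\<^sup>2 - 1) ^ K)"
    if "\<not> r < K" "norm u = 2" for u E :: complex
    unfolding power_add using that nz[OF that(2)] by (simp add: sq row_poly_def)
  show ?thesis
    unfolding A_entry_def moment_integrand_def using lower upper
    by (cases "r < K") (auto intro!: arg_cong[where f = "\<lambda>z. z / _"] contour_integral_eq simp: add_eq_0_iff2)
qed

lemma A_mat_eq_row_poly_mat_mult: "A_mat K t1 t2 = row_poly_mat K * moment_mat K t1 t2"
proof (rule eq_matI)
  fix r j assume "r < dim_row (row_poly_mat K * moment_mat K t1 t2)"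
    "j < dim_col (row_poly_mat K * moment_mat K t1 t2)"
  then have r: "r < 2 * K" and j: "j < 2 * K" by (simp_all add: row_poly_mat_def moment_mat_def)
  have shift: "(\<lambda>u. (u + 1) ^ k * moment_integrand K t1 t2 0 j u) = moment_integrand K t1 t2 k j" for k
    by (simp add: moment_integrand_def[abs_def] mult.assoc)
  have "moment_integrand K t1 t2 k j contour_integrable_on circlepath 0 2" for k
    by (rule contour_integrable_holomorphic_simple[OF moment_integrand_holomorphic]) auto
  then have "A_entry K t1 t2 r j
      = (\<Sum>k<2 * K. coeff (row_poly K r) k * moment_mat K t1 t2 $$ (k, j))"
    unfolding A_entry_eq_contour_integral_row_poly
    using j by (simp add: contour_integral_poly_mult[OF degree_row_poly[OF r]] shift
        moment_mat_def sum_divide_distrib)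
  then show "A_mat K t1 t2 $$ (r, j) = (row_poly_mat K * moment_mat K t1 t2) $$ (r, j)"
    using r j by (simp add: A_mat_def row_poly_mat_def moment_mat_def scalar_prod_def atLeast0LessThan)
qed (simp_all add: A_mat_def row_poly_mat_def moment_mat_def)

theorem lemma1:
  fixes K :: nat and t1 t2 :: complex
  assumes "K \<ge> 1"
  shows "Determinant.det (A_mat K t1 t2) = (-2) ^ (K ^ 2)"
proof -
  have "even (K * K + K * (2 * K - 1))"
    by (cases "even K") (auto simp: algebra_simps)
  then have sign: "(-1::complex) ^ (K * K + K * (2 * K - 1)) = 1"
    by simp
  have "det (A_mat K t1 t2) = det (row_poly_mat K) * det (moment_mat K t1 t2)"
    unfolding A_mat_eq_row_poly_mat_mult
    by (rule det_mult[of _ "2 * K"]) (simp_all add: row_poly_mat_def moment_mat_def)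
  also have "\<dots> = (-1) ^ (K * K + K * (2 * K - 1)) * (-2) ^ (K * K)"
    by (simp add: det_row_poly_mat det_moment_mat power_add)
  finally show ?thesis using sign by (simp add: power2_eq_square)
qed

end
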